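(* Let $n\ge 1$ and let $s$ be an even integer with $0\le s\le n(n-1)$. Put $$p=\left\lfloor \frac{\sqrt{4s+1}-1}{2}\right\rfloor,\qquad q=\frac{s-p(p+1)}{2}.$$ Then $q$ is an integer with $0\le q\le p$, and $T(n,s)$ is the length-$n$ sequence whose first $q$ entries equal $p+1$, whose next $p+1-q$ entries equal $p$, whose $(p+2)$-nd entry (if $n\ge p+2$) equals $q$, and all of whose remaining entries equal $0$; i.e. $T(n,s)=\langle (p+1)^{q},\,p^{\,p+1-q},\,q,\,0^{\,n-p-2}\rangle$ (when $n=p+1$, necessarily $q=0$ and the trailing entry $q$ and zeros are omitted).
   Context: Notation: $\langle a^r\rangle$ denotes $r$ consecutive copies of the value $a$ within a sequence. For integers $n\ge1$ and even $s$ with $0\le s\le n(n-1)$, define $m=\min\{k\ge 1 : s\le k(k-1)\}$ and define the integer sequence $T(n,s)$ of length $n$ recursively by: (i) if $s=0$, $T(n,s)=\langle 0^n\rangle$; (ii) if $s>0$ and $n>m$, $T(n,s)=\langle \gamma_1,\dots,\gamma_m,0^{n-m}\rangle$ where $\gamma=T(m,s)$; (iii) if $s>0$ and $n\le m$, $T(n,s)=\langle n-1,\gamma_1+1,\dots,\gamma_{n-1}+1\rangle$ where $\gamma=T(n-1,\,s-2(n-1))$. *)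

theory Defs
  imports Complex_Main
begin

definition tm :: "nat \<Rightarrow> nat" where
  "tm s = (LEAST k. k \<ge> 1 \<and> s \<le> k * (k - 1))"

text \<open>The sequence T(n,s), as a list of length n (recursion as in the paper;
  the value is only meaningful for even s with s \<le> n(n-1)).\<close>
function T :: "nat \<Rightarrow> nat \<Rightarrow> nat list" where
  "T n s =
    (if n = 0 then []
     else if s = 0 then replicate n 0
     else if n > tm s then T (tm s) s @ replicate (n - tm s) 0
     else (n - 1) # map (\<lambda>x. x + 1) (T (n - 1) (s - 2 * (n - 1))))"
  by pat_completeness auto
termination by (relation "measure fst") auto

declare T.simps[simp del]

end

theory Submission
  imports Defs
begin

text \<open>Every natural number s has a unique representation s = p(p+1) + 2q with 0 \<le> q \<le> p, and
  p is the floor in the statement. For such s > 0 the parameter m(s) equals p+1 if q = 0 and p+2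
  otherwise, so case (ii) pads the sequence T(m(s),s) with zeros, while case (iii) for n = m(s)
  reduces s to (p-1)p + 2(q-1) (resp. (p-1)p) and adds 1 to every entry.\<close>

definition closed_form :: "nat \<Rightarrow> nat \<Rightarrow> nat \<Rightarrow> nat list" where
  "closed_form n p q = replicate q (p + 1) @ replicate (p + 1 - q) p
     @ (if n \<ge> p + 2 then [q] @ replicate (n - p - 2) 0 else [])"

lemma closed_form_zero: "n \<ge> 1 \<Longrightarrow> closed_form n 0 0 = replicate n 0"
  by (cases n; cases "n - 1") (auto simp: closed_form_def)

lemma closed_form_cons_pronic:
  "Suc p # map (\<lambda>x. x + 1) (closed_form (Suc p) p 0) = closed_form (Suc (Suc p)) (Suc p) 0"
  by (simp add: closed_form_def map_replicate del: replicate_Suc) (simp flip: replicate_Suc)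

lemma closed_form_cons:
  "q \<le> p \<Longrightarrow> Suc (Suc p) # map (\<lambda>x. x + 1) (closed_form (Suc (Suc p)) p q)
     = closed_form (Suc (Suc (Suc p))) (Suc p) (Suc q)"
  by (simp add: closed_form_def map_replicate Suc_diff_le)

lemma closed_form_append_zeros:
  assumes "m = (if q = 0 then p + 1 else p + 2)" and "m \<le> n"
  shows "closed_form m p q @ replicate (n - m) 0 = closed_form n p q"
proof (cases "q = 0")
  case True
  then show ?thesis using assms
    by (cases "n = m") (auto simp: closed_form_def Suc_diff_Suc simp flip: replicate_Suc)
next
  case False
  then show ?thesis using assms by (simp add: closed_form_def)
qed

lemma mult_pred_mono: "(j::nat) \<le> k \<Longrightarrow> j * (j - 1) \<le> k * (k - 1)"
  by (intro mult_le_mono) auto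

lemma tm_eqI:
  assumes "k \<ge> 1" and "s \<le> k * (k - 1)" and "(k - 1) * (k - 2) < s"
  shows "tm s = k"
  unfolding tm_def
proof (rule Least_equality)
  show "1 \<le> k \<and> s \<le> k * (k - 1)" using assms by auto
next
  fix j assume j: "1 \<le> j \<and> s \<le> j * (j - 1)"
  show "k \<le> j"
  proof (rule ccontr)
    assume "\<not> k \<le> j"
    then have "j * (j - 1) \<le> (k - 1) * (k - 1 - 1)" by (intro mult_pred_mono) auto
    with j assms(3) show False by (simp add: numeral_2_eq_2)
  qed
qed

lemma tm_pronic_plus:
  assumes "1 \<le> p" and "q \<le> p"
  shows "tm (p * (p + 1) + 2 * q) = (if q = 0 then p + 1 else p + 2)"
proof (cases "q = 0")
  case True
  have "p * (p - 1) < p * (p + 1)" using assms by (intro mult_strict_left_mono) auto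
  with True show ?thesis by (auto intro!: tm_eqI)
next
  case False
  then show ?thesis using assms by (auto intro!: tm_eqI simp: algebra_simps)
qed

lemma T_pronic_plus:
  assumes "q \<le> p" and "p + 1 \<le> n" and "n = p + 1 \<Longrightarrow> q = 0"
  shows "T n (p * (p + 1) + 2 * q) = closed_form n p q"
  using assms
proof (induction n arbitrary: p q rule: less_induct)
  case (less n)
  define s where "s = p * (p + 1) + 2 * q"
  show ?case
  proof (cases p)
    case 0
    with less.prems have "q = 0" "n \<ge> 1" by auto
    with 0 show ?thesis by (subst T.simps) (simp add: closed_form_zero)
  next
    case (Suc p')
    define m where "m = (if q = 0 then p + 1 else p + 2)"
    have s_pos: "s \<noteq> 0" and tm_s: "tm s = m"
      using Suc less.prems(1) tm_pronic_plus[of p q] by (auto simp: s_def m_def)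
    have "m \<le> n" using less.prems by (cases "n = p + 1") (auto simp: m_def)
    have T_m: "T m s = (m - 1) # map (\<lambda>x. x + 1) (T (m - 1) (s - 2 * (m - 1)))"
      using s_pos tm_s by (subst T.simps) (simp add: m_def)
    have "T m s = closed_form m p q"
    proof (cases q)
      case 0
      have "s - 2 * (m - 1) = p' * (p' + 1) + 2 * 0"
        using Suc 0 by (simp add: s_def m_def algebra_simps)
      moreover have "T p (p' * (p' + 1) + 2 * 0) = closed_form p p' 0"
        using less.IH[of p 0 p'] less.prems Suc by simp
      ultimately show ?thesis
        using T_m Suc 0 closed_form_cons_pronic[of p'] by (simp add: m_def)
    next
      case (Suc q')
      have "s - 2 * (m - 1) = p' * (p' + 1) + 2 * q'"
        using \<open>p = Suc p'\<close> Suc by (simp add: s_def m_def algebra_simps)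
      moreover have "T (p + 1) (p' * (p' + 1) + 2 * q') = closed_form (p + 1) p' q'"
        using less.IH[of "p + 1" q' p'] less.prems \<open>m \<le> n\<close> \<open>p = Suc p'\<close> Suc
        by (simp add: m_def)
      ultimately show ?thesis
        using T_m \<open>p = Suc p'\<close> Suc less.prems(1) closed_form_cons[of q' p'] by (simp add: m_def)
    qed
    moreover have "T n s = T m s @ replicate (n - m) 0"
      using s_pos tm_s \<open>m \<le> n\<close> by (cases "n = m") (simp, subst T.simps, simp)
    ultimately show ?thesis
      using closed_form_append_zeros[OF m_def \<open>m \<le> n\<close>] by (simp add: s_def)
  qed
qed

lemma floor_pronic_root:
  fixes s :: nat and p :: int
  assumes "p = \<lfloor>(sqrt (4 * real s + 1) - 1) / 2\<rfloor>"
  shows "0 \<le> p" and "nat p * (nat p + 1) \<le> s" and "s < (nat p + 1) * (nat p + 2)"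
proof -
  define r where "r = sqrt (4 * real s + 1)"
  have "r \<ge> 1" and r_sq: "r * r = 4 * real s + 1"
    unfolding r_def by (simp_all flip: real_sqrt_mult)
  then show "0 \<le> p" unfolding assms r_def[symmetric] by simp
  then have p: "real (nat p) = of_int p" by simp
  have "2 * real (nat p) + 1 \<le> r"
    using p of_int_floor_le[of "(r - 1) / 2"] unfolding assms r_def[symmetric] by simp
  then have "(2 * real (nat p) + 1) * (2 * real (nat p) + 1) \<le> r * r"
    by (intro mult_mono) auto
  then have "real (nat p * (nat p + 1)) \<le> real s" using r_sq by (simp add: algebra_simps)
  then show "nat p * (nat p + 1) \<le> s" by linarith
  have "(r - 1) / 2 < of_int p + 1"
    using floor_correct[of "(r - 1) / 2"] unfolding assms r_def[symmetric] by simp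
  then have "r < 2 * real (nat p) + 3" using p by simp
  then have "r * r < (2 * real (nat p) + 3) * (2 * real (nat p) + 3)"
    using \<open>r \<ge> 1\<close> by (intro mult_strict_mono) auto
  then have "real s < real ((nat p + 1) * (nat p + 2))" using r_sq by (simp add: algebra_simps)
  then show "s < (nat p + 1) * (nat p + 2)" by linarith
qed

theorem theorem4:
  fixes n s :: nat and p :: int and q :: real
  assumes "n \<ge> 1" and "even s" and "s \<le> n * (n - 1)"
    and "p = \<lfloor>(sqrt (4 * real s + 1) - 1) / 2\<rfloor>"
    and "q = (real s - of_int p * (of_int p + 1)) / 2"
  shows "\<exists>k::nat. q = real k \<and> 0 \<le> p \<and> int k \<le> p \<and>
           T n s = replicate k (nat p + 1) @ replicate (nat p + 1 - k) (nat p)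
                   @ (if n \<ge> nat p + 2 then [k] @ replicate (n - nat p - 2) 0 else [])
           \<and> (n = nat p + 1 \<longrightarrow> k = 0)"
proof -
  define P where "P = nat p"
  note bounds = floor_pronic_root[OF assms(4), folded P_def]
  have "even (s - P * (P + 1))" using assms(2) bounds(2) by simp
  then obtain k where "s - P * (P + 1) = 2 * k" by (rule evenE)
  with bounds(2) have s: "s = P * (P + 1) + 2 * k" by simp
  have "k \<le> P" using bounds(3) s by (simp add: algebra_simps)
  have "P + 1 \<le> n"
  proof (rule ccontr)
    assume "\<not> P + 1 \<le> n"
    then have "n * (n - 1) \<le> P * (P - 1)" by (intro mult_pred_mono) simp
    moreover have "P * (P - 1) < P * (P + 1)" using \<open>\<not> P + 1 \<le> n\<close> assms(1)
      by (intro mult_strict_left_mono) auto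
    ultimately show False using assms(3) bounds(2) by simp
  qed
  have k0: "n = P + 1 \<Longrightarrow> k = 0" using assms(3) s by (simp add: mult.commute)
  have "q = real k" using assms(5) s bounds(1) by (simp add: P_def algebra_simps)
  with T_pronic_plus[OF \<open>k \<le> P\<close> \<open>P + 1 \<le> n\<close> k0] \<open>k \<le> P\<close> bounds(1) k0 s show ?thesis
    by (intro exI[of _ k]) (auto simp: P_def closed_form_def)
qed

end
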